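(* Let $L$ be a finite-dimensional Lie algebra over a field $F$ and let $0\ne u\in L$ be such that $Fu$ is semi-modular in $L$ but not an ideal of $L$. Then one of the following holds: (i) $L$ is almost abelian; (ii) $\langle u,x\rangle$ is a $\mu$-algebra for every $x\in L\setminus Fu$; (iii) $F$ has characteristic two and there is an isomorphism $L\cong K$ carrying $Fu$ onto $Fc$.
   Context: $K$ denotes the three-dimensional Lie algebra with basis $a,b,c$ and products $[a,b]=c$, $[b,c]=b$, $[a,c]=a$. $\langle U,B\rangle$ denotes the generated subalgebra. A subalgebra $B$ covers a subalgebra $A$ if $A$ is a maximal subalgebra of $B$. $U$ is upper modular (um) in $L$ if whenever $B$ is a subalgebra of $L$ which covers $U\cap B$, then $\langle U,B\rangle$ covers $U$; $U$ is lower modular (lm) in $L$ if whenever $B$ is a subalgebra of $L$ such that $\langle U,B\rangle$ covers $U$, then $B$ covers $U\cap B$; $U$ is semi-modular (sm) in $L$ if it is both um and lm. A $\mu$-algebra is a non-solvable Lie algebra in which every proper subalgebra is one-dimensional. $L$ is almost abelian if $L=L^2\oplus Fx$ for some $x$, where $L^2=[L,L]$ is abelian and $\mathrm{ad}\,x$ acts as the identity map on $L^2$. *)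

theory Defs
  imports Complex_Main "HOL-Library.Product_Plus"
begin

text \<open>A Lie algebra is modelled as a whole type 'v (an additive group) together with
a scalar multiplication s by a field 'f and a bracket br.  The Lie algebra L is UNIV.\<close>

definition lie_algebra :: "('f::field \<Rightarrow> 'v::ab_group_add \<Rightarrow> 'v) \<Rightarrow> ('v \<Rightarrow> 'v \<Rightarrow> 'v) \<Rightarrow> bool" where
  "lie_algebra s br \<longleftrightarrow> Vector_Spaces.vector_space s
     \<and> (\<forall>x y z. br (x + y) z = br x z + br y z)
     \<and> (\<forall>x y z. br x (y + z) = br x y + br x z)
     \<and> (\<forall>a x y. br (s a x) y = s a (br x y))
     \<and> (\<forall>a x y. br x (s a y) = s a (br x y))
     \<and> (\<forall>x. br x x = 0)
     \<and> (\<forall>x y z. br x (br y z) + br y (br z x) + br z (br x y) = 0)"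

definition fin_dim :: "('f::field \<Rightarrow> 'v::ab_group_add \<Rightarrow> 'v) \<Rightarrow> bool" where
  "fin_dim s \<longleftrightarrow> (\<exists>B. finite B \<and> module.span s B = UNIV)"

definition lie_sub :: "('f::field \<Rightarrow> 'v::ab_group_add \<Rightarrow> 'v) \<Rightarrow> ('v \<Rightarrow> 'v \<Rightarrow> 'v) \<Rightarrow> 'v set \<Rightarrow> bool" where
  "lie_sub s br A \<longleftrightarrow> module.subspace s A \<and> (\<forall>x\<in>A. \<forall>y\<in>A. br x y \<in> A)"

definition lie_ideal :: "('f::field \<Rightarrow> 'v::ab_group_add \<Rightarrow> 'v) \<Rightarrow> ('v \<Rightarrow> 'v \<Rightarrow> 'v) \<Rightarrow> 'v set \<Rightarrow> bool" where
  "lie_ideal s br I \<longleftrightarrow> module.subspace s I \<and> (\<forall>x. \<forall>y\<in>I. br x y \<in> I)"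

definition lie_gen :: "('f::field \<Rightarrow> 'v::ab_group_add \<Rightarrow> 'v) \<Rightarrow> ('v \<Rightarrow> 'v \<Rightarrow> 'v) \<Rightarrow> 'v set \<Rightarrow> 'v set" where
  "lie_gen s br S = \<Inter>{B. lie_sub s br B \<and> S \<subseteq> B}"

definition covers :: "('f::field \<Rightarrow> 'v::ab_group_add \<Rightarrow> 'v) \<Rightarrow> ('v \<Rightarrow> 'v \<Rightarrow> 'v) \<Rightarrow> 'v set \<Rightarrow> 'v set \<Rightarrow> bool" where
  "covers s br B A \<longleftrightarrow> lie_sub s br A \<and> lie_sub s br B \<and> A \<subset> B
     \<and> (\<forall>C. lie_sub s br C \<and> A \<subseteq> C \<and> C \<subseteq> B \<longrightarrow> C = A \<or> C = B)"

definition upper_modular :: "('f::field \<Rightarrow> 'v::ab_group_add \<Rightarrow> 'v) \<Rightarrow> ('v \<Rightarrow> 'v \<Rightarrow> 'v) \<Rightarrow> 'v set \<Rightarrow> bool" where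
  "upper_modular s br U \<longleftrightarrow> lie_sub s br U \<and>
     (\<forall>B. lie_sub s br B \<and> covers s br B (U \<inter> B) \<longrightarrow> covers s br (lie_gen s br (U \<union> B)) U)"

definition lower_modular :: "('f::field \<Rightarrow> 'v::ab_group_add \<Rightarrow> 'v) \<Rightarrow> ('v \<Rightarrow> 'v \<Rightarrow> 'v) \<Rightarrow> 'v set \<Rightarrow> bool" where
  "lower_modular s br U \<longleftrightarrow> lie_sub s br U \<and>
     (\<forall>B. lie_sub s br B \<and> covers s br (lie_gen s br (U \<union> B)) U \<longrightarrow> covers s br B (U \<inter> B))"

definition semi_modular :: "('f::field \<Rightarrow> 'v::ab_group_add \<Rightarrow> 'v) \<Rightarrow> ('v \<Rightarrow> 'v \<Rightarrow> 'v) \<Rightarrow> 'v set \<Rightarrow> bool" where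
  "semi_modular s br U \<longleftrightarrow> upper_modular s br U \<and> lower_modular s br U"

definition lie_derived :: "('f::field \<Rightarrow> 'v::ab_group_add \<Rightarrow> 'v) \<Rightarrow> ('v \<Rightarrow> 'v \<Rightarrow> 'v) \<Rightarrow> 'v set \<Rightarrow> 'v set" where
  "lie_derived s br A = module.span s {br x y | x y. x \<in> A \<and> y \<in> A}"

definition lie_solvable :: "('f::field \<Rightarrow> 'v::ab_group_add \<Rightarrow> 'v) \<Rightarrow> ('v \<Rightarrow> 'v \<Rightarrow> 'v) \<Rightarrow> 'v set \<Rightarrow> bool" where
  "lie_solvable s br M \<longleftrightarrow> (\<exists>n. (lie_derived s br ^^ n) M = {0})"

definition mu_algebra :: "('f::field \<Rightarrow> 'v::ab_group_add \<Rightarrow> 'v) \<Rightarrow> ('v \<Rightarrow> 'v \<Rightarrow> 'v) \<Rightarrow> 'v set \<Rightarrow> bool" where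
  "mu_algebra s br M \<longleftrightarrow> lie_sub s br M \<and> \<not> lie_solvable s br M \<and>
     (\<forall>C. lie_sub s br C \<and> C \<subset> M \<and> C \<noteq> {0} \<longrightarrow> vector_space.dim s C = 1)"

definition almost_abelian :: "('f::field \<Rightarrow> 'v::ab_group_add \<Rightarrow> 'v) \<Rightarrow> ('v \<Rightarrow> 'v \<Rightarrow> 'v) \<Rightarrow> bool" where
  "almost_abelian s br \<longleftrightarrow> (let L2 = lie_derived s br UNIV in
     \<exists>x. L2 \<inter> module.span s {x} = {0} \<and> {a + b | a b. a \<in> L2 \<and> b \<in> module.span s {x}} = UNIV
        \<and> (\<forall>a\<in>L2. \<forall>b\<in>L2. br a b = 0)
        \<and> (\<forall>a\<in>L2. br x a = a))"

text \<open>The algebra K on F^3 with basis a=(1,0,0), b=(0,1,0), c=(0,0,1):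
  [a,b]=c, [b,c]=b, [a,c]=a.\<close>
definition K_scale :: "'f::field \<Rightarrow> 'f \<times> 'f \<times> 'f \<Rightarrow> 'f \<times> 'f \<times> 'f" where
  "K_scale t v = (t * fst v, t * fst (snd v), t * snd (snd v))"

definition K_br :: "'f::field \<times> 'f \<times> 'f \<Rightarrow> 'f \<times> 'f \<times> 'f \<Rightarrow> 'f \<times> 'f \<times> 'f" where
  "K_br x y = (let (x1, x2, x3) = x; (y1, y2, y3) = y in
     (x1 * y3 - x3 * y1, x2 * y3 - x3 * y2, x1 * y2 - x2 * y1))"

definition lie_iso :: "('f::field \<Rightarrow> 'v::ab_group_add \<Rightarrow> 'v) \<Rightarrow> ('v \<Rightarrow> 'v \<Rightarrow> 'v)
    \<Rightarrow> ('f \<Rightarrow> 'w::ab_group_add \<Rightarrow> 'w) \<Rightarrow> ('w \<Rightarrow> 'w \<Rightarrow> 'w) \<Rightarrow> ('v \<Rightarrow> 'w) \<Rightarrow> bool" where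
  "lie_iso s br s' br' \<phi> \<longleftrightarrow> Vector_Spaces.linear s s' \<phi> \<and> bij \<phi> \<and> (\<forall>x y. \<phi> (br x y) = br' (\<phi> x) (\<phi> y))"

end

(*
  Call y plane-closed if [u, y] lies in span {u, y}.  Upper modularity makes every
  <u, x> with x outside U a cover of U; comparing <u, y> with <u, y + x> shows that as
  soon as one vector outside U is plane-closed, all vectors are (plane_closed_spread).
  - If all vectors are plane-closed, ad u acts as one nonzero scalar modulo U, so a
    rescaling v of u satisfies [v, y] - y in F v.  Then L = E + F v with E the
    1-eigenspace of ad v and [E, E] in F v: either E is abelian and L is almost
    abelian, or char F = 2 and a frame e1, e2, v of L realises the products of K
    (locales ad_unit and K_frame, theorem almost_abelian_or_K).
  - If no vector outside U is plane-closed, lower modularity forces every proper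
    subalgebra of <u, x> to be a line, and <u, x> is perfect (mu_algebra_gen).
*)
theory Submission
  imports Defs
begin

locale lie_alg =
  fixes s :: "'f::field \<Rightarrow> 'v::ab_group_add \<Rightarrow> 'v" and br :: "'v \<Rightarrow> 'v \<Rightarrow> 'v"
  assumes lie: "lie_algebra s br"
begin

sublocale vector_space s
  using lie unfolding lie_algebra_def by auto

lemma bl_add: "br (x + y) z = br x z + br y z"
  using lie unfolding lie_algebra_def by auto
lemma br_add: "br x (y + z) = br x y + br x z"
  using lie unfolding lie_algebra_def by auto
lemma bl_scale: "br (s a x) y = s a (br x y)"
  using lie unfolding lie_algebra_def by auto
lemma br_scale: "br x (s a y) = s a (br x y)"
  using lie unfolding lie_algebra_def by auto
lemma br_self [simp]: "br x x = 0"
  using lie unfolding lie_algebra_def by auto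
lemma jacobi: "br x (br y z) + br y (br z x) + br z (br x y) = 0"
  using lie unfolding lie_algebra_def by auto

lemma bl_zero [simp]: "br 0 y = 0"
  using bl_add[of 0 0 y] by simp
lemma br_zero [simp]: "br y 0 = 0"
  using br_add[of y 0 0] by simp

lemma br_anti: "br y x = - br x y"
proof -
  have "br (x + y) (x + y) = br x x + br y x + (br x y + br y y)"
    by (simp only: bl_add br_add)
  then have "br y x + br x y = 0" by simp
  then show ?thesis by (simp only: eq_neg_iff_add_eq_0)
qed

lemma br_neg: "br x (- y) = - br x y"
  using br_add[of x "- y" y] by (simp add: eq_neg_iff_add_eq_0)

lemma span1: "y \<in> span {x} \<longleftrightarrow> (\<exists>k. y = s k x)"
  by (auto simp: span_singleton)

lemma span2: "y \<in> span {a, b} \<longleftrightarrow> (\<exists>p q. y = s p a + s q b)"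
proof
  assume "y \<in> span {a, b}"
  then obtain k where "y - s k a \<in> span {b}" by (auto simp: span_insert)
  then obtain q where "y - s k a = s q b" by (auto simp: span1)
  then show "\<exists>p q. y = s p a + s q b" by (metis diff_add_cancel add.commute)
next
  assume "\<exists>p q. y = s p a + s q b"
  then obtain p q where y: "y = s p a + s q b" by blast
  have "a \<in> span {a, b}" "b \<in> span {a, b}" by (auto intro: span_base)
  then show "y \<in> span {a, b}" unfolding y by (intro span_add span_scale)
qed

lemma span2_I1: "a \<in> span {a, b}" and span2_I2: "b \<in> span {a, b}"
  by (auto intro: span_base)

lemma span1_sub2: "span {a} \<subseteq> span {a, b}"
  by (rule span_mono) auto

lemma plane_eq:
  assumes "y \<in> span {u, x}" "y \<notin> span {u}"
  shows "span {u, y} = span {u, x}"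
proof -
  have "x \<in> span {u, y}"
    using in_span_insert[of y x "{u}"] assms by (simp add: insert_commute)
  then show ?thesis
    using assms(1) by (simp add: span_eq span2_I1 span_insert_0)
qed

lemma independent_mod_line:
  assumes y: "y \<notin> span {u, y0}" and y0: "y0 \<notin> span {u}"
    and comb: "s m y + s n y0 \<in> span {u}"
  shows "m = 0" and "n = 0"
proof -
  have "s m y + s n y0 \<in> span {u, y0}" using comb span1_sub2 by blast
  then have "(s m y + s n y0) - s n y0 \<in> span {u, y0}" by (intro span_diff span_scale span2_I2)
  then have "s m y \<in> span {u, y0}" by simp
  then have "s (inverse m) (s m y) \<in> span {u, y0}" by (rule span_scale)
  then show m: "m = 0" using y by (cases "m = 0") auto
  then have "s n y0 \<in> span {u}" using comb by simp
  then have "s (inverse n) (s n y0) \<in> span {u}" by (rule span_scale)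
  then show "n = 0" using y0 by (cases "n = 0") auto
qed

lemma dim_line: "c \<noteq> 0 \<Longrightarrow> dim (span {c}) = 1"
  by (subst dim_span_eq_card_independent) auto

lemma lie_sub_subspace: "lie_sub s br A \<Longrightarrow> subspace A"
  unfolding lie_sub_def by auto

lemma lie_sub_br: "lie_sub s br A \<Longrightarrow> x \<in> A \<Longrightarrow> y \<in> A \<Longrightarrow> br x y \<in> A"
  unfolding lie_sub_def by auto

lemma lie_sub_inter: "lie_sub s br A \<Longrightarrow> lie_sub s br B \<Longrightarrow> lie_sub s br (A \<inter> B)"
  unfolding lie_sub_def by (auto intro: subspace_inter)

lemma lie_sub_line: "lie_sub s br (span {x})"
  unfolding lie_sub_def by (auto simp: span1 bl_scale br_scale span_zero)

lemma lie_gen_sub: "lie_sub s br (lie_gen s br S)"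
proof -
  let ?F = "{B. lie_sub s br B \<and> S \<subseteq> B}"
  have "subspace (\<Inter>?F)"
  proof (rule subspaceI)
    show "0 \<in> \<Inter>?F" unfolding lie_sub_def using subspace_0 by blast
    fix x y c assume "x \<in> \<Inter>?F" "y \<in> \<Inter>?F"
    then show "x + y \<in> \<Inter>?F" unfolding lie_sub_def using subspace_add by blast
  next
    fix x c assume "x \<in> \<Inter>?F"
    then show "s c x \<in> \<Inter>?F" unfolding lie_sub_def using subspace_scale by blast
  qed
  moreover have "\<forall>x\<in>\<Inter>?F. \<forall>y\<in>\<Inter>?F. br x y \<in> \<Inter>?F"
    unfolding lie_sub_def by blast
  ultimately show ?thesis unfolding lie_gen_def lie_sub_def by blast
qed

lemma lie_gen_sup: "S \<subseteq> lie_gen s br S"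
  unfolding lie_gen_def by auto

lemma lie_gen_min: "lie_sub s br B \<Longrightarrow> S \<subseteq> B \<Longrightarrow> lie_gen s br S \<subseteq> B"
  unfolding lie_gen_def by auto

lemma lie_gen_spans: "lie_gen s br (span A \<union> span B) = lie_gen s br (A \<union> B)"
proof -
  have "span A \<union> span B \<subseteq> T \<longleftrightarrow> A \<union> B \<subseteq> T" if "subspace T" for T
    using that span_superset[of A] span_superset[of B] span_minimal[of A T] span_minimal[of B T]
    by blast
  then have "{C. lie_sub s br C \<and> span A \<union> span B \<subseteq> C} = {C. lie_sub s br C \<and> A \<union> B \<subseteq> C}"
    unfolding lie_sub_def by blast
  then show ?thesis unfolding lie_gen_def by simp
qed

lemma gen_pair:
  "u \<in> lie_gen s br {u, x}" "x \<in> lie_gen s br {u, x}"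
  "span {u} \<subseteq> lie_gen s br {u, x}" "lie_sub s br (lie_gen s br {u, x})"
proof -
  show u: "u \<in> lie_gen s br {u, x}" "x \<in> lie_gen s br {u, x}"
    using lie_gen_sup[of "{u, x}"] by auto
  show L: "lie_sub s br (lie_gen s br {u, x})" by (rule lie_gen_sub)
  show "span {u} \<subseteq> lie_gen s br {u, x}"
    using u L lie_sub_subspace by (intro span_minimal) auto
qed

lemma covers_zero_line:
  assumes "x \<noteq> 0" shows "covers s br (span {x}) {0}"
  unfolding covers_def
proof (intro conjI allI impI)
  show "lie_sub s br {0}" unfolding lie_sub_def by auto
  show "lie_sub s br (span {x})" by (rule lie_sub_line)
  show "{0} \<subset> span {x}" using assms span_zero span_base[of x "{x}"] by auto
  fix C assume C: "lie_sub s br C \<and> {0} \<subseteq> C \<and> C \<subseteq> span {x}"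
  show "C = {0} \<or> C = span {x}"
  proof (cases "C = {0}")
    case False
    then obtain c where c: "c \<in> C" "c \<noteq> 0" using C by auto
    from C c have "c \<in> span {x}" by auto
    then obtain k where k: "c = s k x" by (auto simp: span1)
    with c have "k \<noteq> 0" by auto
    have "s (inverse k) c \<in> C" using C c lie_sub_subspace subspace_scale by blast
    then have "x \<in> C" using k \<open>k \<noteq> 0\<close> by simp
    then have "span {x} \<subseteq> C" using C lie_sub_subspace by (intro span_minimal) auto
    then show ?thesis using C by auto
  qed simp
qed

lemma lie_derived_sub: assumes "lie_sub s br M" shows "lie_derived s br M \<subseteq> M"
  unfolding lie_derived_def using assms lie_sub_br[OF assms] lie_sub_subspace[OF assms]
  by (intro span_minimal) auto

lemma br_in_derived: "a \<in> M \<Longrightarrow> b \<in> M \<Longrightarrow> br a b \<in> lie_derived s br M"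
  unfolding lie_derived_def by (intro span_base) blast

lemma lie_derived_lie_sub: assumes "lie_sub s br M" shows "lie_sub s br (lie_derived s br M)"
  unfolding lie_sub_def
proof (intro conjI ballI)
  show "subspace (lie_derived s br M)" unfolding lie_derived_def by simp
  fix a b assume "a \<in> lie_derived s br M" "b \<in> lie_derived s br M"
  then have "a \<in> M" "b \<in> M" using lie_derived_sub[OF assms] by auto
  then show "br a b \<in> lie_derived s br M" by (rule br_in_derived)
qed


lemma lie_iso_inv:
  fixes psi :: "'w::ab_group_add \<Rightarrow> 'v" and s' :: "'f \<Rightarrow> 'w \<Rightarrow> 'w"
  assumes vs': "vector_space s'"
    and add: "\<And>X Y. psi (X + Y) = psi X + psi Y"
    and scale: "\<And>c X. psi (s' c X) = s c (psi X)"
    and bracket: "\<And>X Y. psi (br' X Y) = br (psi X) (psi Y)"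
    and bij: "bij psi"
  shows "lie_iso s br s' br' (inv psi)"
proof -
  have left: "inv psi (psi X) = X" for X using bij_is_inj[OF bij] by (rule inv_f_f)
  have right: "psi (inv psi y) = y" for y using bij_is_surj[OF bij] by (rule surj_f_inv_f)
  show ?thesis
    unfolding lie_iso_def Vector_Spaces.linear_iff
  proof (intro conjI allI)
    show "vector_space s" by unfold_locales
    show "vector_space s'" by (rule vs')
    show "bij (inv psi)" using bij by (rule bij_imp_bij_inv)
    fix x y :: 'v and c :: 'f
    show "inv psi (x + y) = inv psi x + inv psi y"
      using left[of "inv psi x + inv psi y"] by (simp add: add right)
    show "inv psi (s c x) = s' c (inv psi x)"
      using left[of "s' c (inv psi x)"] by (simp add: scale right)
    show "inv psi (br x y) = br' (inv psi x) (inv psi y)"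
      using left[of "br' (inv psi x) (inv psi y)"] by (simp add: bracket right)
  qed
qed

end

lemma K_vector_space: "vector_space (K_scale :: 'f::field \<Rightarrow> _)"
  unfolding vector_space_def K_scale_def by (auto simp: prod_eq_iff algebra_simps)

lemma K_line: "module.span (K_scale :: 'f::field \<Rightarrow> _) {(0, 0, 1)} = {(0, 0, k) | k. True}"
proof -
  interpret K: vector_space "K_scale :: 'f \<Rightarrow> _" by (rule K_vector_space)
  show ?thesis unfolding K.span_singleton by (auto simp: K_scale_def)
qed

locale ad_unit = lie_alg s br
  for s :: "'f::field \<Rightarrow> 'v::ab_group_add \<Rightarrow> 'v" and br +
  fixes v :: 'v
  assumes v_nonzero: "v \<noteq> 0"
    and ad_v: "br v y - y \<in> span {v}"
begin

lemma ad_v_line: "z \<in> span {v} \<Longrightarrow> br v z = 0"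
  by (auto simp: span1 br_scale)

lemma ad_v_idem: "br v (br v y) = br v y"
proof -
  have "br v (br v y) = br v ((br v y - y) + y)" by simp
  also have "\<dots> = br v y" using ad_v_line[OF ad_v[of y]] by (simp only: br_add) simp
  finally show ?thesis .
qed

definition eig :: "'v set" where
  "eig = {w. br v w = w}"

lemma ad_v_in_eig: "br v y \<in> eig"
  unfolding eig_def by (simp add: ad_v_idem)

lemma eig_subspace: "subspace eig"
  unfolding eig_def subspace_def by (simp add: br_add br_scale)

lemma eig_line_inter: "eig \<inter> span {v} = {0}"
  using ad_v_line span_zero unfolding eig_def by auto

lemma eig_split: "\<exists>k. y = br v y + s k v"
proof -
  obtain k where "br v y - y = s k v" using ad_v[of y] by (auto simp: span1)
  then have "y = br v y + s (- k) v" by (simp add: algebra_simps)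
  then show ?thesis by blast
qed

text \<open>By Jacobi, \<open>ad v\<close> acts on \<open>[w1, w2]\<close> as multiplication by 2; since it also acts
  as the identity modulo \<open>F v\<close>, the bracket lies in \<open>F v\<close> and is 2-torsion.\<close>
lemma eig_bracket:
  assumes w1: "w1 \<in> eig" and w2: "w2 \<in> eig"
  shows "br w1 w2 \<in> span {v}" and "br w1 w2 + br w1 w2 = 0"
proof -
  let ?B = "br w1 w2"
  have a: "br w1 (br w2 v) = - ?B"
    using w2 br_anti[of w2 v] unfolding eig_def by (simp add: br_neg)
  have b: "br w2 (br v w1) = - ?B"
    using w1 br_anti[of w2 w1] unfolding eig_def by simp
  have twice: "br v ?B = ?B + ?B"
    using jacobi[of v w1 w2] unfolding a b
    by (simp add: diff_conv_add_uminus[symmetric] diff_eq_eq)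
  show inline: "?B \<in> span {v}" using ad_v[of ?B] twice by simp
  show "?B + ?B = 0" using ad_v_line[OF inline] twice by simp
qed

lemma derived_eq_eig:
  assumes abelian: "\<forall>w1\<in>eig. \<forall>w2\<in>eig. br w1 w2 = 0"
  shows "lie_derived s br UNIV = eig"
proof
  show "lie_derived s br UNIV \<subseteq> eig" unfolding lie_derived_def
  proof (rule span_minimal[OF _ eig_subspace], safe)
    fix a b
    obtain ka kb where a: "a = br v a + s ka v" and b: "b = br v b + s kb v"
      using eig_split by metis
    have "br a b = br (br v a + s ka v) (br v b + s kb v)" using a b by simp
    also have "\<dots> = br (br v a) (br v b) + s kb (br (br v a) v) + s ka (br v (br v b))"
      by (simp add: bl_add br_add bl_scale br_scale)
    also have "\<dots> = s ka (br v b) - s kb (br v a)"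
      using abelian ad_v_in_eig ad_v_idem br_anti[of "br v a" v] by simp
    finally show "br a b \<in> eig"
      using ad_v_in_eig eig_subspace by (simp add: subspace_diff subspace_scale)
  qed
  show "eig \<subseteq> lie_derived s br UNIV"
  proof
    fix w assume "w \<in> eig"
    then have "w = br v w" unfolding eig_def by simp
    then show "w \<in> lie_derived s br UNIV" using br_in_derived[of v UNIV w] by simp
  qed
qed

lemma almost_abelian_if_eig_abelian:
  assumes abelian: "\<forall>w1\<in>eig. \<forall>w2\<in>eig. br w1 w2 = 0"
  shows "almost_abelian s br"
  unfolding almost_abelian_def Let_def derived_eq_eig[OF abelian]
proof (intro exI[of _ v] conjI ballI)
  show "eig \<inter> span {v} = {0}" by (rule eig_line_inter)
  show "{a + b |a b. a \<in> eig \<and> b \<in> span {v}} = UNIV"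
  proof -
    have "y \<in> {a + b |a b. a \<in> eig \<and> b \<in> span {v}}" for y
      using eig_split[of y] ad_v_in_eig by (auto simp: span1)
    then show ?thesis by blast
  qed
  show "br a b = 0" if "a \<in> eig" "b \<in> eig" for a b using abelian that by blast
  show "br v a = a" if "a \<in> eig" for a using that unfolding eig_def by simp
qed


lemma nonabelian_eig:
  assumes w1: "w1 \<in> eig" and w2: "w2 \<in> eig" and nz: "br w1 w2 \<noteq> 0"
  shows "(2::'f) = 0" and "\<exists>e2\<in>eig. br w1 e2 = v"
proof -
  have "s 2 (br w1 w2) = br w1 w2 + br w1 w2"
    using scale_left_distrib[of 1 1 "br w1 w2"] by (simp add: one_add_one)
  then show "(2::'f) = 0" using eig_bracket(2)[OF w1 w2] nz by simp
  obtain k where k: "br w1 w2 = s k v" using eig_bracket(1)[OF w1 w2] by (auto simp: span1)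
  then have "k \<noteq> 0" using nz by auto
  then have "br w1 (s (inverse k) w2) = v" using k by (simp add: br_scale)
  moreover have "s (inverse k) w2 \<in> eig" using w2 eig_subspace by (rule subspace_scale[rotated])
  ultimately show "\<exists>e2\<in>eig. br w1 e2 = v" by blast
qed

end

locale K_frame = ad_unit s br v
  for s :: "'f::field \<Rightarrow> 'v::ab_group_add \<Rightarrow> 'v" and br v +
  fixes e1 e2
  assumes char2: "(2::'f) = 0"
    and e1: "e1 \<in> eig" and e2: "e2 \<in> eig" and e12: "br e1 e2 = v"
begin

lemma neg_self: "- z = (z::'v)"
proof -
  have "s (1 + 1) z = z + z" by (simp only: scale_left_distrib scale_one)
  then have "z + z = 0" using char2 by (simp only: one_add_one) simp
  then show ?thesis by (metis eq_neg_iff_add_eq_0)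
qed

lemma diff_scalar: "a - b = a + (b::'f)"
proof -
  have "b + b = 2 * b" by simp
  then have "b + b = 0" using char2 by simp
  then show ?thesis by (metis diff_conv_add_uminus eq_neg_iff_add_eq_0)
qed

text \<open>The frame has the multiplication table of \<open>K\<close> (with \<open>a, b, c = e1, e2, v\<close>).\<close>
lemma frame_products:
  "br v e1 = e1" "br v e2 = e2" "br e1 v = e1" "br e2 v = e2" "br e2 e1 = v"
  using e1 e2 e12 br_anti[of e1 v] br_anti[of e2 v] br_anti[of e2 e1] neg_self
  unfolding eig_def by auto

text \<open>The eigenspace is spanned by \<open>e1, e2\<close>: Jacobi on \<open>(e1, e2, w)\<close> expresses \<open>w\<close>
  through the \<open>v\<close>-coefficients of \<open>[e2, w]\<close> and \<open>[w, e1]\<close>.\<close>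
lemma eig_plane:
  assumes w: "w \<in> eig" shows "w \<in> span {e1, e2}"
proof -
  obtain b2 where b2: "br e2 w = s b2 v" using eig_bracket(1)[OF e2 w] by (auto simp: span1)
  obtain b1 where b1: "br w e1 = s b1 v" using eig_bracket(1)[OF w e1] by (auto simp: span1)
  have "br w v = w" using w br_anti[of w v] neg_self unfolding eig_def by simp
  then have "s b2 e1 + s b1 e2 + w = 0"
    using jacobi[of e1 e2 w] unfolding b2 b1 e12 by (simp add: br_scale frame_products)
  then have "w = - (s b2 e1 + s b1 e2)" by (metis add.commute eq_neg_iff_add_eq_0)
  then have "w = s b2 e1 + s b1 e2" by (simp only: neg_self)
  then show ?thesis by (auto simp: span2)
qed

definition kmap :: "'f \<times> 'f \<times> 'f \<Rightarrow> 'v" where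
  "kmap X = s (fst X) e1 + s (fst (snd X)) e2 + s (snd (snd X)) v"

lemma kmap_add: "kmap (X + Y) = kmap X + kmap Y"
  by (cases X; cases Y) (simp add: kmap_def scale_left_distrib algebra_simps)

lemma kmap_scale: "kmap (K_scale c X) = s c (kmap X)"
  by (cases X) (simp add: kmap_def K_scale_def scale_right_distrib)

lemma kmap_br: "kmap (K_br X Y) = br (kmap X) (kmap Y)"
proof -
  obtain p q r p' q' r' where X: "X = (p, q, r)" and Y: "Y = (p', q', r')"
    by (cases X, cases Y) auto
  have "br (kmap X) (kmap Y) = s (p * r') e1 + s (r * p') e1 + s (q * r') e2 + s (r * q') e2
      + s (p * q') v + s (q * p') v"
    unfolding X Y kmap_def
    by (simp add: bl_add br_add bl_scale br_scale frame_products e12 scale_right_distrib ac_simps)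
  also have "\<dots> = kmap (K_br X Y)"
    unfolding X Y kmap_def K_br_def by (simp add: diff_scalar scale_left_distrib ac_simps)
  finally show ?thesis by simp
qed

lemma kmap_kernel:
  assumes "kmap X = 0" shows "X = 0"
proof -
  obtain p q r where X: "X = (p, q, r)" by (cases X) auto
  have h: "s p e1 + s q e2 + s r v = 0" using assms unfolding X kmap_def by simp
  have "br v (s p e1 + s q e2 + s r v) = s p e1 + s q e2"
    by (simp add: br_add br_scale frame_products)
  then have h2: "s p e1 + s q e2 = 0" using h by simp
  then have "s r v = 0" using h by simp
  then have r: "r = 0" using v_nonzero by simp
  have "br (s p e1 + s q e2) e2 = s p v" by (simp add: bl_add bl_scale e12)
  then have p: "p = 0" using h2 v_nonzero by simp
  have "s q e2 = 0" using h2 p by simp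
  then have "br e1 (s q e2) = 0" by (simp only: br_zero)
  then have q: "q = 0" using v_nonzero by (simp add: br_scale e12)
  show ?thesis unfolding X using p q r by (simp add: zero_prod_def)
qed

lemma kmap_bij: "bij kmap"
proof (rule bijI)
  show "inj kmap"
  proof (rule injI)
    fix X Y assume "kmap X = kmap Y"
    then have "kmap (X - Y) = 0" using kmap_add[of "X - Y" Y] by simp
    then have "X - Y = 0" by (rule kmap_kernel)
    then show "X = Y" by simp
  qed
  show "surj kmap"
  proof -
    have "y \<in> range kmap" for y
    proof -
      obtain k where k: "y = br v y + s k v" using eig_split by blast
      obtain p q where "br v y = s p e1 + s q e2"
        using eig_plane[OF ad_v_in_eig[of y]] by (auto simp: span2)
      then have "y = kmap (p, q, k)" using k unfolding kmap_def by simp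
      then show ?thesis by blast
    qed
    then show ?thesis by blast
  qed
qed

lemma K_iso: "\<exists>\<phi>. lie_iso s br K_scale K_br \<phi> \<and> \<phi> ` span {v} = module.span K_scale {(0, 0, 1)}"
proof (intro exI conjI)
  show "lie_iso s br K_scale K_br (inv kmap)"
    using K_vector_space kmap_add kmap_scale kmap_br kmap_bij by (rule lie_iso_inv)
  have "kmap (0, 0, k) = s k v" for k unfolding kmap_def by simp
  then have line: "inv kmap (s k v) = (0, 0, k)" for k
    using inv_f_f[OF bij_is_inj[OF kmap_bij]] by metis
  moreover have "(0, 0, k) \<in> inv kmap ` range (\<lambda>k. s k v)" for k
    using line[of k] by (metis rangeI image_eqI)
  ultimately show "inv kmap ` span {v} = module.span K_scale {(0, 0, 1)}"
    unfolding K_line span_singleton by auto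
qed

end

context ad_unit
begin

theorem almost_abelian_or_K:
  "almost_abelian s br \<or> ((2::'f) = 0 \<and> (\<exists>\<phi>. lie_iso s br K_scale K_br \<phi>
      \<and> \<phi> ` span {v} = module.span K_scale {(0, 0, 1)}))"
proof (cases "\<forall>w1\<in>eig. \<forall>w2\<in>eig. br w1 w2 = 0")
  case True
  then show ?thesis using almost_abelian_if_eig_abelian by blast
next
  case False
  then obtain e1 w2 where "e1 \<in> eig" "w2 \<in> eig" "br e1 w2 \<noteq> 0" by blast
  then obtain e2 where "e2 \<in> eig" "br e1 e2 = v" and char2: "(2::'f) = 0"
    using nonabelian_eig by blast
  then interpret K_frame s br v e1 e2 using \<open>e1 \<in> eig\<close> by unfold_locales
  show ?thesis using K_iso char2 by blast
qed

end

locale sm_line = lie_alg s br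
  for s :: "'f::field \<Rightarrow> 'v::ab_group_add \<Rightarrow> 'v" and br +
  fixes u :: 'v
  assumes u_nonzero: "u \<noteq> 0"
    and sm: "semi_modular s br (span {u})"
    and not_ideal: "\<not> lie_ideal s br (span {u})"
begin

definition plane_closed :: "'v \<Rightarrow> bool" where
  "plane_closed y \<longleftrightarrow> br u y \<in> span {u, y}"

lemma plane_closed_line: "y \<in> span {u} \<Longrightarrow> plane_closed y"
  unfolding plane_closed_def by (auto simp: span1 br_scale span_zero)

lemma plane_closed_sub:
  assumes "plane_closed x" shows "lie_sub s br (span {u, x})"
  unfolding lie_sub_def
proof (intro conjI ballI)
  fix a b assume "a \<in> span {u, x}" "b \<in> span {u, x}"
  then obtain p q p' q' where ab: "a = s p u + s q x" "b = s p' u + s q' x"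
    by (auto simp: span2)
  have c: "br u x \<in> span {u, x}" using assms unfolding plane_closed_def .
  then have c': "br x u \<in> span {u, x}" by (simp add: br_anti[of x u] span_neg)
  have "br a b = s (p' * q) (br x u) + s (q' * p) (br u x)"
    unfolding ab by (simp add: bl_add br_add bl_scale br_scale)
  then show "br a b \<in> span {u, x}" using c c' by (simp add: span_add span_scale)
qed simp

lemma plane_closed_transfer:
  assumes "plane_closed x" "y \<in> span {u, x}" "y \<notin> span {u}"
  shows "plane_closed y"
  using lie_sub_br[OF plane_closed_sub[OF assms(1)] span2_I1 assms(2)]
    plane_eq[OF assms(2,3)] unfolding plane_closed_def by simp

lemma ideal_if_ad_u_line:
  assumes h: "\<And>y. br u y \<in> span {u}" shows "lie_ideal s br (span {u})"
  unfolding lie_ideal_def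
proof (intro conjI allI ballI)
  show "subspace (span {u})" by simp
  fix x y assume "y \<in> span {u}"
  then obtain k where "y = s k u" by (auto simp: span1)
  then have "br x y = s k (- br u x)" by (simp add: br_scale br_anti[of x u])
  then show "br x y \<in> span {u}" using h[of x] by (simp add: span_scale span_neg)
qed

lemma inter_line:
  assumes "x \<notin> span {u}" shows "span {u} \<inter> span {x} = {0}"
proof -
  have "z = 0" if zu: "z \<in> span {u}" and zx: "z \<in> span {x}" for z
  proof -
    obtain k where z1: "z = s k u" using zu by (auto simp: span1)
    obtain m where z2: "z = s m x" using zx by (auto simp: span1)
    note z = z1 z2
    show ?thesis
    proof (cases "m = 0")
      case False
      then have "x = s (inverse m * k) u" using z by (metis scale_scale scale_one left_inverse)
      then show ?thesis using assms by (auto simp: span1)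
    qed (use z in simp)
  qed
  then show ?thesis using span_zero by auto
qed

text \<open>Upper modularity: for \<open>x \<notin> U\<close> the line \<open>F x\<close> covers \<open>U \<inter> F x = 0\<close>, hence
  \<open>\<langle>u, x\<rangle>\<close> covers \<open>U\<close>.\<close>
lemma covers_gen_pair:
  assumes "x \<notin> span {u}" shows "covers s br (lie_gen s br {u, x}) (span {u})"
proof -
  have "x \<noteq> 0" using assms span_zero by auto
  then have "covers s br (span {x}) (span {u} \<inter> span {x})"
    using inter_line[OF assms] covers_zero_line by simp
  then have "covers s br (lie_gen s br (span {u} \<union> span {x})) (span {u})"
    using sm lie_sub_line unfolding semi_modular_def upper_modular_def by blast
  moreover have "{u} \<union> {x} = {u, x}" by auto
  ultimately show ?thesis by (simp only: lie_gen_spans)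
qed

lemma between_line_gen:
  assumes "x \<notin> span {u}" "lie_sub s br C" "span {u} \<subseteq> C" "C \<subseteq> lie_gen s br {u, x}"
  shows "C = span {u} \<or> C = lie_gen s br {u, x}"
  using covers_gen_pair[OF assms(1)] assms(2-4) unfolding covers_def by blast

text \<open>A closed plane inside \<open>\<langle>u, y\<rangle>\<close> is all of it, so \<open>y\<close> is plane-closed too.\<close>
lemma closed_plane_in_gen:
  assumes x: "x \<notin> span {u}" "plane_closed x" and y: "y \<notin> span {u}"
    and xM: "x \<in> lie_gen s br {u, y}"
  shows "plane_closed y"
proof -
  note gM = gen_pair[where u = u and x = y]
  have "span {u, x} \<subseteq> lie_gen s br {u, y}"
    using xM gM(1,4) lie_sub_subspace by (intro span_minimal) auto
  then have "span {u, x} = span {u} \<or> span {u, x} = lie_gen s br {u, y}"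
    using between_line_gen[OF y plane_closed_sub[OF x(2)] span1_sub2] by auto
  moreover have "span {u, x} \<noteq> span {u}" using x(1) span2_I2[of x u] by auto
  ultimately have "y \<in> span {u, x}" using gM(2) by auto
  then show ?thesis using plane_closed_transfer[OF x(2) _ y] by simp
qed

text \<open>If \<open>[u, x] = \<alpha> u + \<beta> x\<close> and \<open>\<langle>u, y\<rangle> \<inter> \<langle>u, y + x\<rangle> = U\<close>, then the element
  \<open>[u, y] + \<alpha> u - \<beta> y = [u, y + x] - \<beta> (y + x)\<close> of both lies in \<open>U\<close>, so \<open>y\<close> is
  plane-closed.\<close>
lemma closed_if_gens_meet_in_line:
  assumes ux: "br u x = s al u + s be x"
    and meet: "lie_gen s br {u, y} \<inter> lie_gen s br {u, y + x} = span {u}"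
  shows "plane_closed y"
proof -
  note gM = gen_pair[where u = u and x = y] and gM' = gen_pair[where u = u and x = "y + x"]
  define w where "w = br u y + s al u - s be y"
  have "w \<in> lie_gen s br {u, y}"
    unfolding w_def using gM lie_sub_subspace[OF gM(4)] lie_sub_br[OF gM(4)]
    by (intro subspace_diff subspace_add subspace_scale) auto
  moreover have "w = br u (y + x) - s be (y + x)"
    unfolding w_def by (simp add: br_add ux scale_right_distrib)
  moreover have "br u (y + x) - s be (y + x) \<in> lie_gen s br {u, y + x}"
    using gM' lie_sub_subspace[OF gM'(4)] lie_sub_br[OF gM'(4)]
    by (intro subspace_diff subspace_scale) auto
  ultimately have "w \<in> span {u}" using meet by auto
  then obtain t where "w = s t u" by (auto simp: span1)
  then have "br u y = s t u - s al u + s be y" unfolding w_def by (simp add: algebra_simps)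
  then show ?thesis unfolding plane_closed_def
    by (simp add: span_add span_diff span_scale span2_I1 span2_I2)
qed

text \<open>Key dichotomy: if some \<open>x \<notin> U\<close> is plane-closed, then every \<open>y\<close> is.  Otherwise
  \<open>M = \<langle>u, y\<rangle>\<close> and \<open>M' = \<langle>u, y + x\<rangle>\<close> both cover \<open>U\<close>, so \<open>M \<inter> M'\<close> is \<open>M'\<close> or \<open>U\<close>;
  the first case contradicts \<open>closed_plane_in_gen\<close>, the second
  \<open>closed_if_gens_meet_in_line\<close>.\<close>
lemma plane_closed_spread:
  assumes x: "x \<notin> span {u}" "plane_closed x" shows "plane_closed y"
proof (rule ccontr)
  assume ny: "\<not> plane_closed y"
  obtain al be where ux: "br u x = s al u + s be x"
    using x(2) unfolding plane_closed_def by (auto simp: span2)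
  have yU: "y \<notin> span {u}" using ny plane_closed_line by blast
  have yxU: "y + x \<notin> span {u}"
  proof
    assume "y + x \<in> span {u}"
    then obtain t where "y + x = s t u" by (auto simp: span1)
    then have "y = s t u - x" by (simp add: eq_diff_eq)
    then have "y \<in> span {u, x}" by (simp add: span_diff span_scale span2_I1 span2_I2)
    then show False using plane_closed_transfer[OF x(2) _ yU] ny by simp
  qed
  define M where "M = lie_gen s br {u, y}"
  define M' where "M' = lie_gen s br {u, y + x}"
  note gM = gen_pair[where u = u and x = y, folded M_def]
    and gM' = gen_pair[where u = u and x = "y + x", folded M'_def]
  have "M \<inter> M' = span {u} \<or> M \<inter> M' = M'"
  proof (rule between_line_gen[OF yxU lie_sub_inter[OF gM(4) gM'(4)], folded M'_def])
    show "span {u} \<subseteq> M \<inter> M'" using gM(3) gM'(3) by simp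
  qed simp
  then show False
  proof
    assume "M \<inter> M' = M'"
    then have "y + x \<in> M" using gM'(2) by auto
    then have "x \<in> M" using gM(2) lie_sub_subspace[OF gM(4)]
      by (metis add_diff_cancel_left' subspace_diff)
    then show False using closed_plane_in_gen[OF x yU] ny unfolding M_def by simp
  next
    assume "M \<inter> M' = span {u}"
    then show False using closed_if_gens_meet_in_line[OF ux] ny unfolding M_def M'_def by simp
  qed
qed

text \<open>If all vectors are plane-closed, \<open>ad u\<close> acts as one scalar \<open>l\<close> modulo \<open>U\<close>:
  comparing the eigenvalues of \<open>y\<close>, \<open>y0\<close> and \<open>y + y0\<close> modulo \<open>U\<close>.\<close>
lemma common_eigenvalue:
  assumes all: "\<And>y. plane_closed y" and y0: "y0 \<notin> span {u}"
  obtains l where "\<And>y. br u y - s l y \<in> span {u}"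
proof -
  obtain a0 l where e0: "br u y0 = s a0 u + s l y0"
    using all[of y0] unfolding plane_closed_def by (auto simp: span2)
  have "br u y - s l y \<in> span {u}" for y
  proof (cases "y \<in> span {u, y0}")
    case True
    then obtain p q where ye: "y = s p u + s q y0" by (auto simp: span2)
    have "br u y = s q (br u y0)" unfolding ye by (simp add: br_add br_scale)
    then have "br u y - s l y = s (q * a0) u + s (q * l) y0 - (s (l * p) u + s (l * q) y0)"
      unfolding e0 ye by (simp add: scale_right_distrib)
    also have "\<dots> = s (q * a0 - l * p) u" by (simp add: mult.commute scale_left_diff_distrib)
    finally show ?thesis by (simp add: span_scale span_base)
  next
    case False
    obtain a m where ey: "br u y = s a u + s m y"
      using all[of y] unfolding plane_closed_def by (auto simp: span2)
    obtain a1 n where eyy: "br u (y + y0) = s a1 u + s n (y + y0)"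
      using all[of "y + y0"] unfolding plane_closed_def by (auto simp: span2)
    have "s a u + s m y + (s a0 u + s l y0) = s a1 u + s n (y + y0)"
      using eyy unfolding br_add ey e0 .
    then have "s (m - n) y + s (l - n) y0 = s (a1 - a - a0) u"
      by (simp add: algebra_simps scale_left_diff_distrib scale_right_distrib)
    then have "m - n = 0" "l - n = 0"
      using independent_mod_line[OF False y0, of "m - n" "l - n"] by (auto simp: span1)
    then have "br u y - s l y = s a u" using ey by simp
    then show ?thesis by (simp add: span_scale span_base)
  qed
  then show ?thesis using that by blast
qed

text \<open>In that case a suitable rescaling \<open>v\<close> of \<open>u\<close> satisfies \<open>[v, y] - y \<in> F v\<close>; the
  scalar is nonzero because \<open>U\<close> is not an ideal.\<close>
lemma ad_unit_rescaled:
  assumes all: "\<And>y. plane_closed y"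
  obtains v where "ad_unit s br v" and "span {v} = span {u}"
proof -
  obtain y0 where y0: "y0 \<notin> span {u}"
    using not_ideal ideal_if_ad_u_line by blast
  obtain l where l: "\<And>y. br u y - s l y \<in> span {u}"
    using common_eigenvalue[OF all y0] by blast
  have "l \<noteq> 0" using l not_ideal ideal_if_ad_u_line by force
  define v where "v = s (inverse l) u"
  have v0: "v \<noteq> 0" unfolding v_def using \<open>l \<noteq> 0\<close> u_nonzero by simp
  have "v \<in> span {u}" unfolding v_def by (intro span_scale span_base) simp
  moreover have "u \<in> span {v}" using \<open>l \<noteq> 0\<close> unfolding v_def span1 by (intro exI[of _ l]) simp
  ultimately have spv: "span {v} = span {u}" by (simp add: span_eq)
  have "br v y - y \<in> span {v}" for y
  proof -
    have "br v y - y = s (inverse l) (br u y - s l y)"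
      unfolding v_def using \<open>l \<noteq> 0\<close> by (simp add: bl_scale scale_right_diff_distrib)
    then show ?thesis using l[of y] spv by (simp add: span_scale)
  qed
  then have "ad_unit s br v"
    by (intro ad_unit.intro ad_unit_axioms.intro lie_alg_axioms v0)
  then show ?thesis using spv that by blast
qed

lemma sub_containing_u:
  assumes x: "x \<notin> span {u}" and C: "lie_sub s br C" "C \<subseteq> lie_gen s br {u, x}"
    "C \<noteq> lie_gen s br {u, x}" "u \<in> C"
  shows "C = span {u}"
proof -
  have "span {u} \<subseteq> C" using C lie_sub_subspace[OF C(1)] by (intro span_minimal) auto
  then show ?thesis using between_line_gen[OF x C(1) _ C(2)] C(3) by auto
qed

text \<open>Lower modularity: a subalgebra \<open>C \<subseteq> \<langle>u, x\<rangle>\<close> avoiding \<open>u\<close> generates \<open>\<langle>u, x\<rangle>\<close>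
  together with \<open>U\<close>, so \<open>C\<close> covers \<open>U \<inter> C = 0\<close> and is a line.\<close>
lemma sub_avoiding_u:
  assumes x: "x \<notin> span {u}" and C: "lie_sub s br C" "C \<subseteq> lie_gen s br {u, x}" "u \<notin> C"
    and c: "c \<in> C" "c \<noteq> 0"
  shows "C = span {c}"
proof -
  let ?M = "lie_gen s br {u, x}" and ?G = "lie_gen s br (span {u} \<union> C)"
  have UC: "span {u} \<inter> C = {0}"
  proof -
    have "z = 0" if zu: "z \<in> span {u}" and zC: "z \<in> C" for z
    proof (rule ccontr)
      assume "z \<noteq> 0"
      obtain k where k: "z = s k u" using zu by (auto simp: span1)
      with \<open>z \<noteq> 0\<close> have "k \<noteq> 0" by auto
      have "s (inverse k) z \<in> C" using zC lie_sub_subspace[OF C(1)] by (intro subspace_scale)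
      then show False using k \<open>k \<noteq> 0\<close> C(3) by simp
    qed
    then show ?thesis using lie_sub_subspace[OF C(1)] subspace_0 span_zero by blast
  qed
  have cU: "c \<notin> span {u}" using UC c by auto
  have UG: "span {u} \<subseteq> ?G" "C \<subseteq> ?G" using lie_gen_sup[of "span {u} \<union> C"] by auto
  have "?G \<subseteq> ?M" using gen_pair[where u = u and x = x] C(2) by (intro lie_gen_min) auto
  then have "?G = span {u} \<or> ?G = ?M" using between_line_gen[OF x lie_gen_sub UG(1)] by blast
  then have "?G = ?M" using UG(2) c cU by auto
  then have "covers s br C (span {u} \<inter> C)"
    using sm C(1) covers_gen_pair[OF x] unfolding semi_modular_def lower_modular_def by metis
  then have cov: "covers s br C {0}" using UC by simp
  have "span {c} \<subseteq> C" using c lie_sub_subspace[OF C(1)] by (intro span_minimal) auto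
  then have "span {c} = {0} \<or> span {c} = C"
    using cov lie_sub_line[of c] span_zero[of "{c}"] unfolding covers_def by blast
  then show ?thesis using c span_base[of c "{c}"] by auto
qed

text \<open>If the derived algebra of \<open>\<langle>u, x\<rangle>\<close> is proper, some vector outside \<open>U\<close> is
  plane-closed: either \<open>x\<close> itself (if \<open>[u, x] \<in> U\<close>) or \<open>c = [u, x]\<close>, since then the
  derived algebra is the line \<open>F c\<close> and contains \<open>[u, c]\<close>.\<close>
lemma proper_derived_closed:
  assumes x: "x \<notin> span {u}"
    and proper: "lie_derived s br (lie_gen s br {u, x}) \<noteq> lie_gen s br {u, x}"
  shows "\<exists>z. z \<notin> span {u} \<and> plane_closed z"
proof (cases "br u x \<in> span {u}")
  case True
  then show ?thesis using x span1_sub2 unfolding plane_closed_def by blast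
next
  case cU: False
  let ?M = "lie_gen s br {u, x}"
  let ?D = "lie_derived s br ?M"
  note gM = gen_pair[where u = u and x = x]
  have DM: "?D \<subseteq> ?M" and D: "lie_sub s br ?D"
    using lie_derived_sub[OF gM(4)] lie_derived_lie_sub[OF gM(4)] .
  have cD: "br u x \<in> ?D" using gM by (intro br_in_derived)
  have uD: "u \<notin> ?D" using sub_containing_u[OF x D DM proper] cD cU by auto
  have "br u x \<noteq> 0" using cU span_zero by auto
  then have Dc: "?D = span {br u x}" by (rule sub_avoiding_u[OF x D DM uD cD])
  have "br u (br u x) \<in> ?D" using gM DM cD by (intro br_in_derived) auto
  then have "plane_closed (br u x)"
    unfolding plane_closed_def Dc using span_mono[of "{br u x}" "{u, br u x}"] by auto
  then show ?thesis using cU by blast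
qed

text \<open>If no vector outside \<open>U\<close> is plane-closed, every \<open>\<langle>u, x\<rangle>\<close> is a \<open>\<mu>\<close>-algebra:
  its proper subalgebras are lines, and it is perfect, hence not solvable.\<close>
lemma mu_algebra_gen:
  assumes none: "\<And>z. z \<notin> span {u} \<Longrightarrow> \<not> plane_closed z" and x: "x \<notin> span {u}"
  shows "mu_algebra s br (lie_gen s br {u, x})"
proof -
  let ?M = "lie_gen s br {u, x}"
  note gM = gen_pair[where u = u and x = x]
  have lines: "dim C = 1" if C: "lie_sub s br C" "C \<subset> ?M" "C \<noteq> {0}" for C
  proof (cases "u \<in> C")
    case True
    then have "C = span {u}" using sub_containing_u[OF x C(1)] C(2) by auto
    then show ?thesis using dim_line[OF u_nonzero] by simp
  next
    case False
    obtain c where c: "c \<in> C" "c \<noteq> 0" using C(3) lie_sub_subspace[OF C(1)] subspace_0 by blast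
    then have "C = span {c}" using sub_avoiding_u[OF x C(1) _ False] C(2) by auto
    then show ?thesis using dim_line[OF c(2)] by simp
  qed
  have perfect: "lie_derived s br ?M = ?M"
    using proper_derived_closed[OF x] none by blast
  have "(lie_derived s br ^^ n) ?M = ?M" for n
    by (induction n) (simp_all add: perfect)
  then have "\<not> lie_solvable s br ?M"
    unfolding lie_solvable_def using gM(1) u_nonzero by auto
  then show ?thesis unfolding mu_algebra_def using gM(4) lines by blast
qed

end

text \<open>Either every vector is plane-closed, and a rescaling of \<open>u\<close> puts us
  in the setting of \<open>ad_unit\<close>; or some vector is not, and then no vector outside \<open>U\<close>
  is, so all \<open>\<langle>u, x\<rangle>\<close> are \<open>\<mu>\<close>-algebras.\<close>
theorem lemma3p4:
  fixes s :: "'f::field \<Rightarrow> 'v::ab_group_add \<Rightarrow> 'v" and br :: "'v \<Rightarrow> 'v \<Rightarrow> 'v" and u :: 'v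
  assumes "lie_algebra s br" and "fin_dim s" and "u \<noteq> 0"
    and "semi_modular s br (module.span s {u})"
    and "\<not> lie_ideal s br (module.span s {u})"
  shows "almost_abelian s br
    \<or> (\<forall>x. x \<notin> module.span s {u} \<longrightarrow> mu_algebra s br (lie_gen s br {u, x}))
    \<or> ((2::'f) = 0 \<and> (\<exists>\<phi>. lie_iso s br K_scale K_br \<phi>
          \<and> \<phi> ` module.span s {u} = module.span K_scale {(0, 0, 1)}))"
proof -
  interpret sm_line s br u
    by unfold_locales (use assms in auto)
  show ?thesis
  proof (cases "\<forall>y. plane_closed y")
    case True
    then obtain v where "ad_unit s br v" and "span {v} = span {u}"
      using ad_unit_rescaled by blast
    then show ?thesis using ad_unit.almost_abelian_or_K by metis
  next
    case False
    then obtain y where "\<not> plane_closed y" by blast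
    then have "\<not> plane_closed x" if "x \<notin> span {u}" for x
      using plane_closed_spread[OF that] by blast
    then show ?thesis using mu_algebra_gen by blast
  qed
qed

end
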